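(* Let $\mathcal N$ be a finite ground set, $f:2^{\mathcal N}\to\mathbb R$ monotone and submodular, $k\ge1$ an integer, and $O$ an optimal solution to $\max\{f(S):|S|\le k\}$. Consider the following algorithm: initialize $A\leftarrow\emptyset$; for each $u\in\mathcal N$ in turn, if $\Delta(u\mid A)\ge f(A)/k$ then $A\leftarrow A\cup\{u\}$; finally return $A'$, the set of the last $k$ elements added to $A$ (or all of $A$ if fewer than $k$ were added). Then $4f(A')\ge f(O)$.
   Context: $f$ is submodular if $f(T\cup\{x\})-f(T)\le f(S\cup\{x\})-f(S)$ for all $S\subseteq T\subseteq\mathcal N$, $x\notin T$; monotone if $f(S)\le f(T)$ for $S\subseteq T$. $\Delta(x\mid S)=f(S\cup\{x\})-f(S)$. *)

theory Defs
  imports Complex_Main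
begin

definition submodular_on :: "'a set \<Rightarrow> ('a set \<Rightarrow> real) \<Rightarrow> bool" where
  "submodular_on N f \<longleftrightarrow>
     (\<forall>S T x. S \<subseteq> T \<and> T \<subseteq> N \<and> x \<in> N \<and> x \<notin> T \<longrightarrow>
        f (T \<union> {x}) - f T \<le> f (S \<union> {x}) - f S)"

definition monotone_on_sets :: "'a set \<Rightarrow> ('a set \<Rightarrow> real) \<Rightarrow> bool" where
  "monotone_on_sets N f \<longleftrightarrow> (\<forall>S T. S \<subseteq> T \<and> T \<subseteq> N \<longrightarrow> f S \<le> f T)"

definition marginal :: "('a set \<Rightarrow> real) \<Rightarrow> 'a \<Rightarrow> 'a set \<Rightarrow> real" where
  "marginal f x S = f (S \<union> {x}) - f S"

text \<open>Streaming pass: processes the elements in the order of the input list;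
  the accumulator is the list of elements added to A so far, in order of addition.\<close>
fun stream_added :: "('a set \<Rightarrow> real) \<Rightarrow> nat \<Rightarrow> 'a list \<Rightarrow> 'a list \<Rightarrow> 'a list" where
  "stream_added f k [] L = L"
| "stream_added f k (u # us) L =
     (if marginal f u (set L) \<ge> f (set L) / real k
      then stream_added f k us (L @ [u])
      else stream_added f k us L)"

definition stream_output :: "('a set \<Rightarrow> real) \<Rightarrow> nat \<Rightarrow> 'a list \<Rightarrow> 'a set" where
  "stream_output f k order =
     (let L = stream_added f k order [] in set (drop (length L - k) L))"

end

theory Submission
  imports Defs
begin

text \<open>Let A be the final set of accepted elements. Every element of O outside A was rejected
  against some earlier A_t, and by submodularity and monotonicity its gain with respect to A
  is still at most f(A)/k; summing over the at most k elements of O gives f(O) \<le> 2 f(A).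
  Every accepted element multiplies f by at least 1 + 1/k, so the prefix P of A preceding its
  last k elements satisfies (1 + 1/k)^k f(P) \<le> f(A), i.e. f(P) \<le> f(A)/2, and subadditivity
  f(A) \<le> f(A') + f(P) gives f(A') \<ge> f(A)/2.\<close>

lemma marginal_antimono:
  assumes "submodular_on N f" "S \<subseteq> T" "T \<subseteq> N" "x \<in> N" "x \<notin> T"
  shows "marginal f x T \<le> marginal f x S"
  using assms unfolding submodular_on_def marginal_def by blast

lemma union_gain_antimono:
  assumes sub: "submodular_on N f" and mono: "monotone_on_sets N f"
    and "finite B" "B \<subseteq> N" "S \<subseteq> T" "T \<subseteq> N"
  shows "f (T \<union> B) - f T \<le> f (S \<union> B) - f S"
  using assms(3,4)
proof (induction B rule: finite_induct)
  case empty
  then show ?case by simp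
next
  case (insert b B)
  have "f (T \<union> insert b B) - f (T \<union> B) \<le> f (S \<union> insert b B) - f (S \<union> B)"
  proof (cases "b \<in> T \<union> B")
    case True
    then have "T \<union> insert b B = T \<union> B" by auto
    moreover have "S \<union> B \<subseteq> S \<union> insert b B" "S \<union> insert b B \<subseteq> N"
      using insert.prems assms(5,6) by auto
    then have "f (S \<union> B) \<le> f (S \<union> insert b B)"
      using mono unfolding monotone_on_sets_def by blast
    ultimately show ?thesis by simp
  next
    case False
    then have "marginal f b (T \<union> B) \<le> marginal f b (S \<union> B)"
      using insert.prems assms(5,6) by (intro marginal_antimono[OF sub]) auto
    then show ?thesis by (simp add: marginal_def)
  qed
  moreover have "f (T \<union> B) - f T \<le> f (S \<union> B) - f S"
    using insert by simp
  ultimately show ?case by linarith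
qed

lemma union_gain_le_sum_marginal:
  assumes sub: "submodular_on N f" and mono: "monotone_on_sets N f"
    and "finite B" "B \<subseteq> N" "T \<subseteq> N"
  shows "f (T \<union> B) - f T \<le> (\<Sum>b\<in>B. marginal f b T)"
  using assms(3,4)
proof (induction B rule: finite_induct)
  case empty
  then show ?case by simp
next
  case (insert b B)
  have "f ((T \<union> B) \<union> {b}) - f (T \<union> B) \<le> f (T \<union> {b}) - f T"
    using insert.prems assms(5) by (intro union_gain_antimono[OF sub mono]) auto
  then show ?case using insert by (simp add: marginal_def)
qed

lemma stream_added_extends: "\<exists>M. stream_added f k us L = L @ M \<and> set M \<subseteq> set us"
proof (induction us arbitrary: L)
  case Nil
  then show ?case by simp
next
  case (Cons u us)
  obtain M1 where "stream_added f k us (L @ [u]) = (L @ [u]) @ M1" "set M1 \<subseteq> set us"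
    using Cons by blast
  moreover obtain M2 where "stream_added f k us L = L @ M2" "set M2 \<subseteq> set us"
    using Cons by blast
  ultimately show ?case
    by (cases "marginal f u (set L) \<ge> f (set L) / real k") (auto intro!: exI[of _ "u # M1"])
qed

lemma stream_added_accepted_gain:
  assumes "length L \<le> i" "i < length (stream_added f k us L)"
  shows "marginal f (stream_added f k us L ! i) (set (take i (stream_added f k us L)))
     \<ge> f (set (take i (stream_added f k us L))) / real k"
  using assms
proof (induction us arbitrary: L)
  case Nil
  then show ?case by simp
next
  case (Cons u us)
  show ?case
  proof (cases "marginal f u (set L) \<ge> f (set L) / real k")
    case accept: True
    then have eq: "stream_added f k (u # us) L = stream_added f k us (L @ [u])" by simp
    show ?thesis
    proof (cases "i = length L")
      case True
      obtain M where "stream_added f k us (L @ [u]) = L @ u # M"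
        using stream_added_extends[of f k us "L @ [u]"] by auto
      then show ?thesis using accept True unfolding eq by (simp add: nth_append)
    next
      case False
      then have "length (L @ [u]) \<le> i" "i < length (stream_added f k us (L @ [u]))"
        using Cons.prems unfolding eq by auto
      then show ?thesis unfolding eq by (rule Cons.IH)
    qed
  next
    case False
    then show ?thesis using Cons by simp
  qed
qed

lemma stream_added_rejected_gain:
  assumes sub: "submodular_on N f" and mono: "monotone_on_sets N f"
    and "set us \<subseteq> N" "set L \<subseteq> N"
    and "u \<in> set us" "u \<notin> set (stream_added f k us L)"
  shows "marginal f u (set (stream_added f k us L)) \<le> f (set (stream_added f k us L)) / real k"
  using assms(3-)
proof (induction us arbitrary: L)
  case Nil
  then show ?case by simp
next
  case (Cons v us)
  let ?R = "stream_added f k us L"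
  show ?case
  proof (cases "marginal f v (set L) \<ge> f (set L) / real k")
    case True
    then have eq: "stream_added f k (v # us) L = stream_added f k us (L @ [v])" by simp
    obtain M where "stream_added f k us (L @ [v]) = L @ v # M"
      using stream_added_extends[of f k us "L @ [v]"] by auto
    then have "u \<in> set us"
      using Cons.prems unfolding eq by auto
    then show ?thesis
      using Cons.IH[of "L @ [v]"] Cons.prems unfolding eq by auto
  next
    case reject: False
    then have eq: "stream_added f k (v # us) L = ?R" by simp
    obtain M where M: "?R = L @ M" "set M \<subseteq> set us"
      using stream_added_extends[of f k us L] by blast
    have RN: "set ?R \<subseteq> N" using M Cons.prems by auto
    show ?thesis
    proof (cases "u = v")
      case True
      have "marginal f v (set ?R) \<le> marginal f v (set L)"
        using Cons.prems M RN True reject by (intro marginal_antimono[OF sub]) auto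
      moreover have "f (set L) \<le> f (set ?R)"
        using mono RN M unfolding monotone_on_sets_def by auto
      then have "f (set L) / real k \<le> f (set ?R) / real k"
        by (simp add: divide_right_mono)
      ultimately show ?thesis
        unfolding eq True using reject by linarith
    next
      case False
      then show ?thesis using Cons unfolding eq by auto
    qed
  qed
qed

lemma geometric_lower_bound:
  fixes g :: "nat \<Rightarrow> real" and c :: real
  assumes "c \<ge> 0" "\<And>j. j < m \<Longrightarrow> g (Suc j) \<ge> c * g j" "i + d \<le> m"
  shows "g (i + d) \<ge> c ^ d * g i"
  using assms(3)
proof (induction d)
  case 0
  then show ?case by simp
next
  case (Suc d)
  have "c ^ Suc d * g i = c * (c ^ d * g i)" by simp
  also have "\<dots> \<le> c * g (i + d)" using Suc assms(1) by (simp add: mult_left_mono)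
  also have "\<dots> \<le> g (Suc (i + d))" using assms(2) Suc.prems by simp
  finally show ?case by simp
qed

lemma one_plus_inverse_power_ge_two:
  assumes "k \<ge> 1"
  shows "(1 + 1 / real k) ^ k \<ge> 2"
proof -
  have "1 + real k * (1 / real k) \<le> (1 + 1 / real k) ^ k"
    by (rule Bernoulli_inequality) (simp add: order.trans[of "-1" 0])
  then show ?thesis using assms by simp
qed

lemma last_k_ge_half:
  assumes sub: "submodular_on N f" and mono: "monotone_on_sets N f"
    and nonneg: "\<forall>S\<subseteq>N. f S \<ge> 0" and "k \<ge> 1" and "set R \<subseteq> N"
    and growth: "\<And>j. j < length R \<Longrightarrow>
      marginal f (R ! j) (set (take j R)) \<ge> f (set (take j R)) / real k"
  shows "2 * f (set (drop (length R - k) R)) \<ge> f (set R)"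
proof (cases "length R \<le> k")
  case True
  then show ?thesis using nonneg assms(5) by simp
next
  case False
  define m where "m = length R - k"
  define g where "g j = f (set (take j R))" for j
  have takeN: "set (take j R) \<subseteq> N" for j
    using assms(5) by (meson order_trans set_take_subset)
  have dropN: "set (drop m R) \<subseteq> N"
    using assms(5) by (meson order_trans set_drop_subset)
  have "g (Suc j) \<ge> (1 + 1 / real k) * g j" if "j < length R" for j
  proof -
    have "set (take (Suc j) R) = set (take j R) \<union> {R ! j}"
      using that by (simp add: take_Suc_conv_app_nth)
    then show ?thesis using growth[OF that] unfolding g_def marginal_def by (simp add: algebra_simps)
  qed
  then have "g (m + k) \<ge> (1 + 1 / real k) ^ k * g m"
    using False unfolding m_def by (intro geometric_lower_bound[where m = "length R"]) auto
  moreover have "(1 + 1 / real k) ^ k * g m \<ge> 2 * g m"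
    using one_plus_inverse_power_ge_two[OF \<open>k \<ge> 1\<close>] nonneg takeN unfolding g_def
    by (intro mult_right_mono) auto
  moreover have "m + k = length R" using False unfolding m_def by simp
  ultimately have prefix_half: "2 * f (set (take m R)) \<le> f (set R)" unfolding g_def by simp
  have split: "set R = set (drop m R) \<union> set (take m R)"
    by (metis append_take_drop_id set_append sup_commute)
  have "f (set R) - f (set (drop m R)) \<le> f ({} \<union> set (take m R)) - f {}"
    unfolding split using takeN dropN by (intro union_gain_antimono[OF sub mono]) auto
  moreover have "f {} \<ge> 0" using nonneg by blast
  ultimately show ?thesis using prefix_half unfolding m_def by simp
qed

lemma opt_le_twice_accepted:
  assumes sub: "submodular_on N f" and mono: "monotone_on_sets N f"
    and nonneg: "\<forall>S\<subseteq>N. f S \<ge> 0" and "k \<ge> 1" and "set order \<subseteq> N"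
    and "finite Opt" "Opt \<subseteq> set order" "card Opt \<le> k"
  shows "f Opt \<le> 2 * f (set (stream_added f k order []))"
proof -
  define A where "A = set (stream_added f k order [])"
  have AN: "A \<subseteq> N"
    using stream_added_extends[of f k order "[]"] assms(5) unfolding A_def by auto
  have fA: "f A \<ge> 0" using nonneg AN by blast
  have kpos: "real k > 0" using assms(4) by simp
  have gain: "marginal f y A \<le> f A / real k" if "y \<in> Opt" for y
  proof (cases "y \<in> A")
    case True
    then show ?thesis using fA kpos by (simp add: marginal_def insert_absorb)
  next
    case False
    then show ?thesis
      using that assms(5,7) unfolding A_def by (intro stream_added_rejected_gain[OF sub mono]) auto
  qed
  have "f Opt \<le> f (A \<union> Opt)"
    using mono AN assms(5,7) unfolding monotone_on_sets_def by auto
  also have "\<dots> \<le> f A + (\<Sum>y\<in>Opt. marginal f y A)"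
    using union_gain_le_sum_marginal[OF sub mono \<open>finite Opt\<close> _ AN] assms(5,7) by force
  also have "\<dots> \<le> f A + real (card Opt) * (f A / real k)"
    using sum_mono[OF gain] by simp
  also have "\<dots> \<le> f A + real k * (f A / real k)"
    using assms(8) fA kpos by (intro add_left_mono mult_right_mono) auto
  also have "\<dots> = 2 * f A" using kpos by simp
  finally show ?thesis unfolding A_def .
qed

theorem theorem4:
  fixes N :: "'a set" and f :: "'a set \<Rightarrow> real" and k :: nat
    and Opt :: "'a set" and order :: "'a list"
  assumes "finite N"
    and "set order = N" and "distinct order"
    and "monotone_on_sets N f"
    and "submodular_on N f"
    and "\<forall>S\<subseteq>N. f S \<ge> 0"
    and "k \<ge> 1"
    and "Opt \<subseteq> N" and "card Opt \<le> k"
    and "\<forall>S. S \<subseteq> N \<and> card S \<le> k \<longrightarrow> f S \<le> f Opt"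
  shows "4 * f (stream_output f k order) \<ge> f Opt"
proof -
  define R where "R = stream_added f k order []"
  have "set R \<subseteq> N"
    using stream_added_extends[of f k order "[]"] assms(2) unfolding R_def by auto
  then have "2 * f (stream_output f k order) \<ge> f (set R)"
    using last_k_ge_half[OF assms(5,4,6,7)] stream_added_accepted_gain[of "[]" _ f k order]
    unfolding stream_output_def R_def Let_def by auto
  moreover have "f Opt \<le> 2 * f (set R)"
    using opt_le_twice_accepted[OF assms(5,4,6,7)] assms(1,2,8,9) finite_subset
    unfolding R_def by blast
  ultimately show ?thesis by linarith
qed

end
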